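(* Let $N\geq 3$ and let $|G\rangle=\frac{1}{\sqrt2}(|0\cdots0\rangle+|1\cdots1\rangle)$ be the $N$-qubit GHZ state and $|\psi_+\rangle=\frac1{\sqrt2}(|00\rangle+|11\rangle)$. Let the measurement settings $X_j,X_j'$ ($j=1,\dots,N$) be as in the context, satisfying the non-degeneracy assumptions (ND), and let $A_a,B_b$ ($a,b\in\{0,1\}$) be the associated two-qubit settings defined in the context. Put $$\langle I^N_{CHSH}\rangle=\sum_{a,b\in\{0,1\}}(-1)^{ab}\langle G|\mathbb A_a\otimes\mathbb B_b|G\rangle,\qquad \langle I^2_{CHSH}\rangle=\sum_{a,b\in\{0,1\}}(-1)^{ab}\langle \psi_+|A_a\otimes B_b|\psi_+\rangle.$$ If $\langle I^N_{CHSH}\rangle>2$ then $\langle I^2_{CHSH}\rangle\geq \langle I^N_{CHSH}\rangle$; and if $\langle I^N_{CHSH}\rangle<-2$ then $\langle I^2_{CHSH}\rangle\leq \langle I^N_{CHSH}\rangle$. In particular, violation of the CHSH inequality $|\langle I^2_{CHSH}\rangle|\le 2$ by $|\psi_+\rangle$ is necessary for violation of $|\langle I^N_{CHSH}\rangle|\le 2$ by $|G\rangle$.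
   Context: $\sigma_x,\sigma_y,\sigma_z$ are the Pauli matrices, $\vec\sigma=(\sigma_x,\sigma_y,\sigma_z)$. For $j=1,\dots,N$, single-qubit observables $X_j=\vec n_j\cdot\vec\sigma$, $X_j'=\vec n_j'\cdot\vec\sigma$ with $\vec n_j=(\sin\alpha_j\cos\varphi_j,\sin\alpha_j\sin\varphi_j,\cos\alpha_j)$, $\vec n_j'=(\sin\alpha_j'\cos\varphi_j',\sin\alpha_j'\sin\varphi_j',\cos\alpha_j')$, $\alpha_j,\alpha_j'\in[0,\pi]$, $\varphi_j,\varphi_j'\in\mathbb R$. Define $\mathbb A_0=\bigotimes_{j=1}^{N-1}X_j$, $\mathbb A_1=\bigotimes_{j=1}^{N-1}X_j'$ (acting on qubits $1,\dots,N-1$), $\mathbb B_0=X_N$, $\mathbb B_1=X_N'$ (acting on qubit $N$). Non-degeneracy assumptions (ND): $D:=(\prod_{j=1}^{N-1}\cos\alpha_j)^2+(\prod_{j=1}^{N-1}\sin\alpha_j)^2\neq0$, $D':=(\prod_{j=1}^{N-1}\cos\alpha_j')^2+(\prod_{j=1}^{N-1}\sin\alpha_j')^2\neq0$, and, if $N$ is odd, $\sin\alpha_N\neq0$ and $\sin\alpha_N'\neq0$. Two-qubit settings: with $\varepsilon=D^{-1/2}$, $\varepsilon'=D'^{-1/2}$, let $A_0=\vec{\mathrm n}_0\cdot\vec\sigma$ with $\vec{\mathrm n}_0=\varepsilon\big(\prod_{j=1}^{N-1}\sin\alpha_j\cos\beta,\ \prod_{j=1}^{N-1}\sin\alpha_j\sin\beta,\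 \prod_{j=1}^{N-1}\cos\alpha_j\big)$, $\beta=\sum_{j=1}^{N-1}\varphi_j$, and $A_1$ defined identically from the primed parameters (with $\varepsilon'$, $\beta'=\sum_{j=1}^{N-1}\varphi_j'$). If $N$ is even, $B_0=X_N$, $B_1=X_N'$; if $N$ is odd, $B_0=\cos\varphi_N\sigma_x+\sin\varphi_N\sigma_y$ and $B_1=\cos\varphi_N'\sigma_x+\sin\varphi_N'\sigma_y$. In $\langle\psi_+|A_a\otimes B_b|\psi_+\rangle$, $A_a$ acts on the first and $B_b$ on the second qubit. *)

theory Defs
  imports Complex_Main
begin

text \<open>Qubit computational basis: False = |0>, True = |1>.
  A single-qubit operator is a 2x2 matrix M given as M r c = <r|M|c>.
  An n-qubit state is a function from basis bit strings (bool lists of length n,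
  list position k = qubit k+1) to complex amplitudes.\<close>

type_synonym qop = "bool \<Rightarrow> bool \<Rightarrow> complex"

definition sigma_x :: qop where
  "sigma_x r c = (if r \<noteq> c then 1 else 0)"

definition sigma_y :: qop where
  "sigma_y r c = (if r = False \<and> c = True then - \<i> else if r = True \<and> c = False then \<i> else 0)"

definition sigma_z :: qop where
  "sigma_z r c = (if r = c then (if r then -1 else 1) else 0)"

definition dot_sigma :: "real \<Rightarrow> real \<Rightarrow> real \<Rightarrow> qop" where
  "dot_sigma n1 n2 n3 r c = complex_of_real n1 * sigma_x r c + complex_of_real n2 * sigma_y r c
                            + complex_of_real n3 * sigma_z r c"

definition bloch_obs :: "real \<Rightarrow> real \<Rightarrow> qop" where
  "bloch_obs a p = dot_sigma (sin a * cos p) (sin a * sin p) (cos a)"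

definition basis_strings :: "nat \<Rightarrow> bool list set" where
  "basis_strings n = {xs. length xs = n}"

definition tensor_apply :: "nat \<Rightarrow> (nat \<Rightarrow> qop) \<Rightarrow> (bool list \<Rightarrow> complex) \<Rightarrow> bool list \<Rightarrow> complex" where
  "tensor_apply n M psi x = (\<Sum>y\<in>basis_strings n. (\<Prod>k<n. M k (x ! k) (y ! k)) * psi y)"

definition expect :: "nat \<Rightarrow> (nat \<Rightarrow> qop) \<Rightarrow> (bool list \<Rightarrow> complex) \<Rightarrow> complex" where
  "expect n M psi = (\<Sum>x\<in>basis_strings n. cnj (psi x) * tensor_apply n M psi x)"

definition ghz :: "nat \<Rightarrow> bool list \<Rightarrow> complex" where
  "ghz n x = (if x = replicate n False \<or> x = replicate n True then complex_of_real (1 / sqrt 2) else 0)"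

abbreviation psi_plus :: "bool list \<Rightarrow> complex" where
  "psi_plus \<equiv> ghz 2"

definition Dnd :: "nat \<Rightarrow> (nat \<Rightarrow> real) \<Rightarrow> real" where
  "Dnd N a = (\<Prod>j=1..N-1. cos (a j))^2 + (\<Prod>j=1..N-1. sin (a j))^2"

text \<open>Settings indexed by s \<in> {0,1}: s = 0 unprimed, s = 1 primed.
  al s j, ph s j are alpha_j, phi_j (s=0) resp. alpha'_j, phi'_j (s=1), j = 1..N.\<close>

text \<open>N-qubit operator  A_a (x) B_b  as a family of single-qubit factors (position k = qubit k+1).\<close>
definition bigAB :: "nat \<Rightarrow> (nat \<Rightarrow> nat \<Rightarrow> real) \<Rightarrow> (nat \<Rightarrow> nat \<Rightarrow> real) \<Rightarrow> nat \<Rightarrow> nat \<Rightarrow> nat \<Rightarrow> qop" where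
  "bigAB N al ph a b k = (if k + 1 < N then bloch_obs (al a (k+1)) (ph a (k+1))
                         else bloch_obs (al b N) (ph b N))"

definition twoA :: "nat \<Rightarrow> (nat \<Rightarrow> nat \<Rightarrow> real) \<Rightarrow> (nat \<Rightarrow> nat \<Rightarrow> real) \<Rightarrow> nat \<Rightarrow> qop" where
  "twoA N al ph a =
     (let eps = 1 / sqrt (Dnd N (al a));
          S = (\<Prod>j=1..N-1. sin (al a j));
          C = (\<Prod>j=1..N-1. cos (al a j));
          beta = (\<Sum>j=1..N-1. ph a j)
      in dot_sigma (eps * S * cos beta) (eps * S * sin beta) (eps * C))"

definition twoB :: "nat \<Rightarrow> (nat \<Rightarrow> nat \<Rightarrow> real) \<Rightarrow> (nat \<Rightarrow> nat \<Rightarrow> real) \<Rightarrow> nat \<Rightarrow> qop" where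
  "twoB N al ph b =
     (if even N then bloch_obs (al b N) (ph b N)
      else dot_sigma (cos (ph b N)) (sin (ph b N)) 0)"

definition twoAB :: "nat \<Rightarrow> (nat \<Rightarrow> nat \<Rightarrow> real) \<Rightarrow> (nat \<Rightarrow> nat \<Rightarrow> real) \<Rightarrow> nat \<Rightarrow> nat \<Rightarrow> nat \<Rightarrow> qop" where
  "twoAB N al ph a b k = (if k = 0 then twoA N al ph a else twoB N al ph b)"

definition I_N_CHSH :: "nat \<Rightarrow> (nat \<Rightarrow> nat \<Rightarrow> real) \<Rightarrow> (nat \<Rightarrow> nat \<Rightarrow> real) \<Rightarrow> complex" where
  "I_N_CHSH N al ph = (\<Sum>a\<in>{0,1::nat}. \<Sum>b\<in>{0,1::nat}. (-1) ^ (a * b) * expect N (bigAB N al ph a b) (ghz N))"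

definition I_2_CHSH :: "nat \<Rightarrow> (nat \<Rightarrow> nat \<Rightarrow> real) \<Rightarrow> (nat \<Rightarrow> nat \<Rightarrow> real) \<Rightarrow> complex" where
  "I_2_CHSH N al ph = (\<Sum>a\<in>{0,1::nat}. \<Sum>b\<in>{0,1::nat}. (-1) ^ (a * b) * expect 2 (twoAB N al ph a b) psi_plus)"

end

theory Submission
  imports Defs
begin

text \<open>For the GHZ state every correlator factorises as
  \<open>\<langle>G|\<A>\<^sub>a \<otimes> \<B>\<^sub>b|G\<rangle> = p\<^sub>a q\<^sub>b \<langle>\<psi>\<^sub>+|A\<^sub>a \<otimes> B\<^sub>b|\<psi>\<^sub>+\<rangle>\<close> with
  \<open>p\<^sub>a = \<surd>D\<^sub>a\<close> and \<open>q\<^sub>b = 1\<close> (\<open>N\<close> even) or \<open>q\<^sub>b = sin \<alpha>\<^sub>N\<close> (\<open>N\<close> odd), all in \<open>[0,1]\<close>,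
  while the two-qubit correlators are bounded by 1 in absolute value. The CHSH expression is affine
  in each scaling factor separately; once its value exceeds 2, the part not involving a given factor is at
  most 2 in absolute value, so raising that factor to 1 can only increase the value.
  Raising all four factors in turn yields the two-qubit CHSH value.\<close>

lemma expect_ghz:
  assumes "n \<ge> 1"
  shows "expect n M (ghz n) = ((\<Prod>k<n. M k False False) + (\<Prod>k<n. M k True True)
     + (\<Prod>k<n. M k False True) + (\<Prod>k<n. M k True False)) / 2"
proof -
  let ?z0 = "replicate n False" and ?z1 = "replicate n True"
  let ?r = "complex_of_real (1 / sqrt 2)"
  have sum_support: "(\<Sum>y\<in>basis_strings n. f y * ghz n y) = (f ?z0 + f ?z1) * ?r" for f
  proof -
    have "?z0 \<noteq> ?z1" using assms by (cases n) auto
    moreover have "(\<Sum>y\<in>basis_strings n. f y * ghz n y) = (\<Sum>y\<in>{?z0, ?z1}. f y * ghz n y)"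
      by (rule sum.mono_neutral_right)
         (use finite_lists_length_eq[of "UNIV :: bool set" n] in
           \<open>auto simp: basis_strings_def ghz_def\<close>)
    ultimately show ?thesis by (simp add: ghz_def algebra_simps)
  qed
  have "cnj (ghz n x) = ghz n x" for x
    by (simp add: ghz_def)
  then have "expect n M (ghz n) = (\<Sum>x\<in>basis_strings n. tensor_apply n M (ghz n) x * ghz n x)"
    unfolding expect_def by (simp add: mult.commute)
  also have "\<dots> = cnj ?r * ?r * ((\<Prod>k<n. M k False False) + (\<Prod>k<n. M k True True)
     + (\<Prod>k<n. M k False True) + (\<Prod>k<n. M k True False))"
    unfolding sum_support tensor_apply_def by (simp add: algebra_simps)
  also have "cnj ?r * ?r = 1 / 2"
    by (simp flip: of_real_mult)
  finally show ?thesis by simp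
qed

lemma dot_sigma_entries:
  "dot_sigma x y z False False = complex_of_real z"
  "dot_sigma x y z True True = - complex_of_real z"
  "dot_sigma x y z False True = complex_of_real x - \<i> * complex_of_real y"
  "dot_sigma x y z True False = complex_of_real x + \<i> * complex_of_real y"
  by (simp_all add: dot_sigma_def sigma_x_def sigma_y_def sigma_z_def)

lemma bloch_obs_entries:
  "bloch_obs a p False False = complex_of_real (cos a)"
  "bloch_obs a p True True = - complex_of_real (cos a)"
  "bloch_obs a p False True = complex_of_real (sin a) * cis (- p)"
  "bloch_obs a p True False = complex_of_real (sin a) * cis p"
  by (simp_all add: bloch_obs_def dot_sigma_entries complex_eq_iff)

text \<open>The sign of the \<open>y\<close>-term reflects \<open>\<langle>\<psi>\<^sub>+|\<sigma>\<^sub>y \<otimes> \<sigma>\<^sub>y|\<psi>\<^sub>+\<rangle> = -1\<close>.\<close>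

lemma expect_psi_plus_dot_sigma:
  "expect 2 (\<lambda>k. if k = 0 then dot_sigma x1 y1 z1 else dot_sigma x2 y2 z2) psi_plus
   = complex_of_real (x1 * x2 - y1 * y2 + z1 * z2)"
  by (simp add: expect_ghz numeral_2_eq_2 lessThan_Suc dot_sigma_entries complex_eq_iff field_simps)

lemma abs_psi_plus_correlation_le_1:
  fixes x1 y1 z1 x2 y2 z2 :: real
  assumes "x1\<^sup>2 + y1\<^sup>2 + z1\<^sup>2 \<le> 1" and "x2\<^sup>2 + y2\<^sup>2 + z2\<^sup>2 \<le> 1"
  shows "\<bar>x1 * x2 - y1 * y2 + z1 * z2\<bar> \<le> 1"
proof -
  \<comment> \<open>Lagrange's identity for the vectors \<open>(x\<^sub>1, y\<^sub>1, z\<^sub>1)\<close> and \<open>(x\<^sub>2, -y\<^sub>2, z\<^sub>2)\<close>\<close>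
  have "(x1\<^sup>2 + y1\<^sup>2 + z1\<^sup>2) * (x2\<^sup>2 + y2\<^sup>2 + z2\<^sup>2) - (x1 * x2 - y1 * y2 + z1 * z2)\<^sup>2
      = (x1 * y2 + y1 * x2)\<^sup>2 + (x1 * z2 - z1 * x2)\<^sup>2 + (y1 * z2 + z1 * y2)\<^sup>2"
    by (simp add: power2_eq_square algebra_simps)
  then have "(x1 * x2 - y1 * y2 + z1 * z2)\<^sup>2 \<le> (x1\<^sup>2 + y1\<^sup>2 + z1\<^sup>2) * (x2\<^sup>2 + y2\<^sup>2 + z2\<^sup>2)"
    by (smt (verit) zero_le_power2)
  also have "\<dots> \<le> 1"
    using assms by (intro mult_le_one) auto
  finally show ?thesis
    by (simp add: abs_square_le_1)
qed

lemma prod_of_real_mult_cis: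
  "(\<Prod>k\<in>K. complex_of_real (u k) * cis (v k)) = complex_of_real (\<Prod>k\<in>K. u k) * cis (\<Sum>k\<in>K. v k)"
  by (induction K rule: infinite_finite_induct) (simp_all add: cis_mult[symmetric] algebra_simps)

lemma expect_ghz_bigAB:
  assumes "N \<ge> 2"
  shows "expect N (bigAB N al ph a b) (ghz N) = complex_of_real
    ((if even N then (\<Prod>j=1..N-1. cos (al a j)) * cos (al b N) else 0)
     + (\<Prod>j=1..N-1. sin (al a j)) * sin (al b N) * cos ((\<Sum>j=1..N-1. ph a j) + ph b N))"
proof -
  obtain m where m: "N = Suc m"
    using assms by (cases N) auto
  define C where "C = (\<Prod>j=1..N-1. cos (al a j))"
  define S where "S = (\<Prod>j=1..N-1. sin (al a j))"
  define \<gamma> where "\<gamma> = (\<Sum>j=1..N-1. ph a j) + ph b N"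
  have prod_shift: "(\<Prod>j=1..N-1. f j) = (\<Prod>k<m. f (Suc k))" for f :: "nat \<Rightarrow> 'c::comm_monoid_mult"
    by (simp add: m prod.atLeast1_atMost_eq)
  have factors: "(\<Prod>k<N. bigAB N al ph a b k r c)
      = (\<Prod>j=1..N-1. bloch_obs (al a j) (ph a j) r c) * bloch_obs (al b N) (ph b N) r c" for r c
    unfolding prod_shift by (simp add: m bigAB_def)
  have "(\<Prod>k<N. bigAB N al ph a b k False False) = complex_of_real (C * cos (al b N))"
    and "(\<Prod>k<N. bigAB N al ph a b k True True) = complex_of_real ((-1) ^ N * C * cos (al b N))"
    unfolding factors C_def prod_shift bloch_obs_entries
    by (simp_all add: prod_uminus m)
  moreover have "(\<Prod>k<N. bigAB N al ph a b k False True) = complex_of_real (S * sin (al b N)) * cis (- \<gamma>)"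
    and "(\<Prod>k<N. bigAB N al ph a b k True False) = complex_of_real (S * sin (al b N)) * cis \<gamma>"
    unfolding factors S_def \<gamma>_def bloch_obs_entries prod_of_real_mult_cis
    by (simp_all add: sum_negf cis_mult mult_ac add_ac)
  ultimately have "expect N (bigAB N al ph a b) (ghz N)
      = complex_of_real ((1 + (-1) ^ N) / 2 * C * cos (al b N) + S * sin (al b N) * cos \<gamma>)"
    using assms by (simp add: expect_ghz field_simps) (simp add: complex_eq_iff)
  also have "(1 + (-1) ^ N) / 2 = (if even N then 1 else 0 :: real)"
    by simp
  finally show ?thesis
    by (cases "even N") (simp_all add: C_def S_def \<gamma>_def)
qed

lemma twoA_eq_dot_sigma:
  "twoA N al ph a = dot_sigma
     ((\<Prod>j=1..N-1. sin (al a j)) * cos (\<Sum>j=1..N-1. ph a j) / sqrt (Dnd N (al a)))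
     ((\<Prod>j=1..N-1. sin (al a j)) * sin (\<Sum>j=1..N-1. ph a j) / sqrt (Dnd N (al a)))
     ((\<Prod>j=1..N-1. cos (al a j)) / sqrt (Dnd N (al a)))"
  by (simp add: twoA_def Let_def)

lemma twoB_eq_dot_sigma:
  "twoB N al ph b = dot_sigma
     ((if even N then sin (al b N) else 1) * cos (ph b N))
     ((if even N then sin (al b N) else 1) * sin (ph b N))
     (if even N then cos (al b N) else 0)"
  by (simp add: twoB_def bloch_obs_def)

lemma twoAB_eq: "twoAB N al ph a b = (\<lambda>k. if k = 0 then twoA N al ph a else twoB N al ph b)"
  by (simp add: fun_eq_iff twoAB_def)

lemma expect_psi_plus_twoAB:
  "expect 2 (twoAB N al ph a b) psi_plus = complex_of_real
    (((if even N then (\<Prod>j=1..N-1. cos (al a j)) * cos (al b N) else 0)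
      + (\<Prod>j=1..N-1. sin (al a j)) * (if even N then sin (al b N) else 1)
          * cos ((\<Sum>j=1..N-1. ph a j) + ph b N)) / sqrt (Dnd N (al a)))"
  unfolding twoAB_eq twoA_eq_dot_sigma twoB_eq_dot_sigma expect_psi_plus_dot_sigma
  by (rule arg_cong[where f = complex_of_real])
     (simp add: cos_add add_divide_distrib diff_divide_distrib algebra_simps)

lemma abs_Re_expect_psi_plus_twoAB_le_1:
  "\<bar>Re (expect 2 (twoAB N al ph a b) psi_plus)\<bar> \<le> 1"
proof -
  define C where "C = (\<Prod>j=1..N-1. cos (al a j))"
  define S where "S = (\<Prod>j=1..N-1. sin (al a j))"
  define \<beta> where "\<beta> = (\<Sum>j=1..N-1. ph a j)"
  define r where "r = (if even N then sin (al b N) else 1)"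
  define z where "z = (if even N then cos (al b N) else 0)"
  have D: "Dnd N (al a) = C\<^sup>2 + S\<^sup>2"
    by (simp add: Dnd_def C_def S_def)
  have "(S * cos \<beta> / sqrt (Dnd N (al a)))\<^sup>2 + (S * sin \<beta> / sqrt (Dnd N (al a)))\<^sup>2
      + (C / sqrt (Dnd N (al a)))\<^sup>2 = ((S * cos \<beta>)\<^sup>2 + (S * sin \<beta>)\<^sup>2 + C\<^sup>2) / (C\<^sup>2 + S\<^sup>2)"
    by (simp add: D power_divide add_divide_distrib)
  also have "(S * cos \<beta>)\<^sup>2 + (S * sin \<beta>)\<^sup>2 + C\<^sup>2 = C\<^sup>2 + S\<^sup>2"
    by (simp add: power_mult_distrib flip: distrib_left)
  also have "(C\<^sup>2 + S\<^sup>2) / (C\<^sup>2 + S\<^sup>2) \<le> 1"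
    \<comment> \<open>not \<open>= 1\<close>: if \<open>D = 0\<close>, then \<open>1 / \<surd>D = 0\<close> and \<open>A\<^sub>a\<close> is the zero matrix\<close>
    by simp
  finally have unit_A: "(S * cos \<beta> / sqrt (Dnd N (al a)))\<^sup>2 + (S * sin \<beta> / sqrt (Dnd N (al a)))\<^sup>2
      + (C / sqrt (Dnd N (al a)))\<^sup>2 \<le> 1" .
  have "(r * cos (ph b N))\<^sup>2 + (r * sin (ph b N))\<^sup>2 + z\<^sup>2 = r\<^sup>2 + z\<^sup>2"
    by (simp add: power_mult_distrib flip: distrib_left)
  also have "r\<^sup>2 + z\<^sup>2 = 1"
    by (simp add: r_def z_def)
  finally have unit_B: "(r * cos (ph b N))\<^sup>2 + (r * sin (ph b N))\<^sup>2 + z\<^sup>2 \<le> 1"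
    by simp
  show ?thesis
    using abs_psi_plus_correlation_le_1[OF unit_A unit_B]
    unfolding twoAB_eq twoA_eq_dot_sigma twoB_eq_dot_sigma expect_psi_plus_dot_sigma
      C_def[symmetric] S_def[symmetric] \<beta>_def[symmetric] r_def[symmetric] z_def[symmetric]
    by (simp only: Re_complex_of_real)
qed

lemma expect_ghz_bigAB_eq_scaled:
  assumes "N \<ge> 2" and "Dnd N (al a) \<noteq> 0"
  shows "expect N (bigAB N al ph a b) (ghz N)
    = complex_of_real (sqrt (Dnd N (al a)) * (if even N then 1 else sin (al b N)))
      * expect 2 (twoAB N al ph a b) psi_plus"
proof -
  have "sqrt (Dnd N (al a)) \<noteq> 0"
    using assms(2) by simp
  then show ?thesis
    unfolding expect_ghz_bigAB[OF assms(1)] expect_psi_plus_twoAB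
    by (cases "even N") (simp_all flip: of_real_mult of_real_divide)
qed

lemma prod_cos_sq_add_prod_sin_sq_le_1:
  fixes f :: "'a \<Rightarrow> real"
  assumes "finite J" and "J \<noteq> {}"
  shows "(\<Prod>j\<in>J. cos (f j))\<^sup>2 + (\<Prod>j\<in>J. sin (f j))\<^sup>2 \<le> 1"
  using assms
proof (induction J rule: finite_ne_induct)
  case (singleton j)
  show ?case by simp
next
  case (insert j J)
  let ?P = "\<Prod>j\<in>J. cos (f j)" and ?Q = "\<Prod>j\<in>J. sin (f j)"
  have "(cos (f j) * ?P)\<^sup>2 + (sin (f j) * ?Q)\<^sup>2 \<le> ?P\<^sup>2 + ?Q\<^sup>2"
    unfolding power_mult_distrib
    by (intro add_mono mult_left_le_one_le) (auto simp: abs_square_le_1)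
  with insert show ?case by simp
qed

lemma Dnd_le_1: "N \<ge> 2 \<Longrightarrow> Dnd N A \<le> 1"
  unfolding Dnd_def by (rule prod_cos_sq_add_prod_sin_sq_le_1) auto

lemma mult_le_of_unit_interval:
  fixes x y c :: real
  assumes "0 \<le> x" "x \<le> 1" "y \<le> c" "0 \<le> c"
  shows "x * y \<le> c"
proof (cases "y \<ge> 0")
  case True
  then have "x * y \<le> y"
    using assms(1,2) by (simp add: mult_left_le_one_le)
  then show ?thesis using assms(3) by linarith
next
  case False
  then have "x * y \<le> 0"
    using assms(1) by (simp add: mult_nonneg_nonpos)
  then show ?thesis using assms(4) by linarith
qed

lemma affine_le_at_one:
  fixes x A R c :: real
  assumes "0 \<le> x" "x \<le> 1" "R \<le> c" "c < x * A + R"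
  shows "x * A + R \<le> A + R"
proof -
  have "0 < x * A"
    using assms(3,4) by linarith
  then have "0 < A"
    using assms(1) by (simp add: zero_less_mult_iff)
  then show ?thesis
    using assms(2) by (simp add: mult_left_le_one_le)
qed

lemma chsh_le_of_scaled_chsh_gt_2:
  fixes G00 G01 G10 G11 p0 p1 q0 q1 :: real
  assumes G: "\<bar>G00\<bar> \<le> 1" "\<bar>G01\<bar> \<le> 1" "\<bar>G10\<bar> \<le> 1" "\<bar>G11\<bar> \<le> 1"
    and p: "0 \<le> p0" "p0 \<le> 1" "0 \<le> p1" "p1 \<le> 1"
    and q: "0 \<le> q0" "q0 \<le> 1" "0 \<le> q1" "q1 \<le> 1"
    and gt: "2 < p0 * q0 * G00 + p0 * q1 * G01 + p1 * q0 * G10 - p1 * q1 * G11"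
  shows "p0 * q0 * G00 + p0 * q1 * G01 + p1 * q0 * G10 - p1 * q1 * G11 \<le> G00 + G01 + G10 - G11"
proof -
  have qG: "q0 * G00 \<le> 1" "q1 * G01 \<le> 1" "q0 * G10 - q1 * G11 \<le> 2"
    using mult_le_of_unit_interval[OF q(1,2), of G00 1] mult_le_of_unit_interval[OF q(3,4), of G01 1]
      mult_le_of_unit_interval[OF q(1,2), of G10 1] mult_le_of_unit_interval[OF q(3,4), of "- G11" 1] G
    by (auto simp: abs_le_iff)
  have step_p0: "p0 * q0 * G00 + p0 * q1 * G01 + p1 * q0 * G10 - p1 * q1 * G11
      \<le> (q0 * G00 + q1 * G01) + p1 * (q0 * G10 - q1 * G11)"
    using affine_le_at_one[OF p(1,2), of "p1 * (q0 * G10 - q1 * G11)" 2 "q0 * G00 + q1 * G01"]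
      mult_le_of_unit_interval[OF p(3,4) qG(3)] gt
    by (simp add: algebra_simps)
  have step_p1: "(q0 * G00 + q1 * G01) + p1 * (q0 * G10 - q1 * G11)
      \<le> q0 * (G00 + G10) + q1 * (G01 - G11)"
    using affine_le_at_one[OF p(3,4), of "q0 * G00 + q1 * G01" 2 "q0 * G10 - q1 * G11"]
      qG step_p0 gt
    by (simp add: algebra_simps)
  have step_q0: "q0 * (G00 + G10) + q1 * (G01 - G11) \<le> (G00 + G10) + q1 * (G01 - G11)"
    using affine_le_at_one[OF q(1,2), of "q1 * (G01 - G11)" 2 "G00 + G10"]
      mult_le_of_unit_interval[OF q(3,4), of "G01 - G11" 2] G step_p0 step_p1 gt
    by (simp add: algebra_simps)
  have step_q1: "(G00 + G10) + q1 * (G01 - G11) \<le> G00 + G01 + G10 - G11"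
    using affine_le_at_one[OF q(3,4), of "G00 + G10" 2 "G01 - G11"]
      G step_p0 step_p1 step_q0 gt
    by (simp add: algebra_simps)
  show ?thesis
    using step_p0 step_p1 step_q0 step_q1 by linarith
qed

theorem theorem1:
  fixes N :: nat and alpha alpha' phi phi' :: "nat \<Rightarrow> real"
  defines "al \<equiv> (\<lambda>s::nat. if s = 0 then alpha else alpha')"
      and "ph \<equiv> (\<lambda>s::nat. if s = 0 then phi else phi')"
  assumes N3: "N \<ge> 3"
    and alpha_range: "\<forall>j\<in>{1..N}. 0 \<le> alpha j \<and> alpha j \<le> pi"
    and alpha'_range: "\<forall>j\<in>{1..N}. 0 \<le> alpha' j \<and> alpha' j \<le> pi"
    and ND: "Dnd N alpha \<noteq> 0" and ND': "Dnd N alpha' \<noteq> 0"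
    and ND_odd: "odd N \<longrightarrow> sin (alpha N) \<noteq> 0 \<and> sin (alpha' N) \<noteq> 0"
  shows "(Re (I_N_CHSH N al ph) > 2 \<longrightarrow> Re (I_2_CHSH N al ph) \<ge> Re (I_N_CHSH N al ph))
       \<and> (Re (I_N_CHSH N al ph) < -2 \<longrightarrow> Re (I_2_CHSH N al ph) \<le> Re (I_N_CHSH N al ph))"
proof -
  define X where "X a b = Re (expect N (bigAB N al ph a b) (ghz N))" for a b
  define Y where "Y a b = Re (expect 2 (twoAB N al ph a b) psi_plus)" for a b
  define p where "p a = sqrt (Dnd N (al a))" for a
  define q where "q b = (if even N then 1 else sin (al b N))" for b
  have X_eq: "X a b = p a * q b * Y a b" if "a \<in> {0, 1}" for a b
    using that ND ND' N3
    by (auto simp: X_def Y_def p_def q_def al_def expect_ghz_bigAB_eq_scaled)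
  have Y_le: "\<bar>Y a b\<bar> \<le> 1" and neg_Y_le: "\<bar>- Y a b\<bar> \<le> 1" for a b
    by (simp_all add: Y_def abs_Re_expect_psi_plus_twoAB_le_1)
  have p_range: "0 \<le> p a" "p a \<le> 1" for a
    using Dnd_le_1[of N "al a"] N3 by (simp_all add: p_def Dnd_def)
  have q_range: "0 \<le> q b" "q b \<le> 1" if "b \<in> {0, 1}" for b
    using that alpha_range alpha'_range N3 by (auto simp: q_def al_def intro: sin_ge_zero)
  have I_N: "Re (I_N_CHSH N al ph) = X 0 0 + X 0 1 + X 1 0 - X 1 1"
    and I_2: "Re (I_2_CHSH N al ph) = Y 0 0 + Y 0 1 + Y 1 0 - Y 1 1"
    by (simp_all add: I_N_CHSH_def I_2_CHSH_def X_def Y_def)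
  note scaled = chsh_le_of_scaled_chsh_gt_2[OF _ _ _ _ p_range[of 0] p_range[of 1]
      q_range[of 0] q_range[of 1]]
  show ?thesis
    using scaled[OF Y_le[of 0 0] Y_le[of 0 1] Y_le[of 1 0] Y_le[of 1 1]]
      scaled[OF neg_Y_le[of 0 0] neg_Y_le[of 0 1] neg_Y_le[of 1 0] neg_Y_le[of 1 1]]
    unfolding I_N I_2 by (auto simp: X_eq)
qed

end
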